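(* For $n\ge 2$, the polynomials $P_n(x)$, $P_n^+(x)$, $P_n^-(x)$ all belong to ${\rm RZ}(-\infty,0)$, and $$P_{n+1}(x)\ll S_n(x),\qquad P^+_{n+1}(x)\prec S_n(x),\qquad S_n(x)\ll P^-_{n+1}(x).$$
   Context: For a permutation $\pi$ of $[n]=\{1,\dots,n\}$, ${\rm des}(\pi)=\#\{i\in[n-1]:\pi(i)>\pi(i+1)\}$. A double descent is an index $i\in[n-2]$ with $\pi(i)>\pi(i+1)>\pi(i+2)$; $\pi$ is simsun if for every $k\in[n]$ the subword of $\pi$ consisting of the letters in $[k]$ (in order of appearance) has no double descents. Let $\mathcal{RS}_n$ be the set of simsun permutations of $[n]$, $\mathcal{RS}_n^+=\{\pi\in\mathcal{RS}_n:\pi(1)>\pi(2)\}$, $\mathcal{RS}_n^-=\{\pi\in\mathcal{RS}_n:\pi(1)<\pi(2)\}$, and $S_n(x)=\sum_{\pi\in\mathcal{RS}_n}x^{{\rm des}(\pi)}$. An interior peak of $\pi$ is an index $i\in\{2,\dots,n-1\}$ with $\pi(i-1)<\pi(i)>\pi(i+1)$; ${\rm pk}(\pi)$ is their number. Let $P_n(x)=\sum_{\pi\in\mathcal{RS}_n}x^{{\rm pk}(\pi)}$, $P^\pm_n(x)=\sum_{\pi\in\mathcal{RS}^\pm_n}x^{{\rm pk}(\pi)}$. ${\rm RZ}(I)$ denotes the set of real polynomials all of whose zeros are real and lie in the interval $I$. For real-rooted $p,q$ with zeros $\xi_1\le\dots\le\xi_n$ of $p$ and $\theta_1\le\dots\le\theta_m$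 of $q$: $p$ interlaces $q$ (written $p\dagger q$) if $\deg q=1+\deg p$ and $\theta_1\le\xi_1\le\theta_2\le\cdots\le\xi_n\le\theta_{n+1}$; $p$ alternates left of $q$ (written $p\ll q$) if $\deg p=\deg q$ and $\xi_1\le\theta_1\le\xi_2\le\cdots\le\xi_n\le\theta_n$; $p\prec q$ means $p\dagger q$ or $p\ll q$. By convention $a\prec bx+c$ for any real constants $a,b,c$. *)

theory Defs
  imports "HOL-Computational_Algebra.Polynomial" "HOL-Combinatorics.Multiset_Permutations"
begin

(* A permutation pi of [n] is represented by its one-line notation: the list
   [pi(1), ..., pi(n)], i.e. an element of permutations_of_set {1..n}.
   List indices are 0-based, so pi(i) = xs ! (i-1). *)

definition des :: "nat list \<Rightarrow> nat" where
  "des xs = card {i. i + 1 < length xs \<and> xs ! i > xs ! (i + 1)}"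

definition has_double_descent :: "nat list \<Rightarrow> bool" where
  "has_double_descent xs \<longleftrightarrow>
     (\<exists>i. i + 2 < length xs \<and> xs ! i > xs ! (i + 1) \<and> xs ! (i + 1) > xs ! (i + 2))"

definition simsun :: "nat \<Rightarrow> nat list \<Rightarrow> bool" where
  "simsun n xs \<longleftrightarrow> (\<forall>k\<in>{1..n}. \<not> has_double_descent (filter (\<lambda>x. x \<le> k) xs))"

definition RS :: "nat \<Rightarrow> nat list set" where
  "RS n = {xs \<in> permutations_of_set {1..n}. simsun n xs}"

definition RS_plus :: "nat \<Rightarrow> nat list set" where
  "RS_plus n = {xs \<in> RS n. xs ! 0 > xs ! 1}"

definition RS_minus :: "nat \<Rightarrow> nat list set" where
  "RS_minus n = {xs \<in> RS n. xs ! 0 < xs ! 1}"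

(* interior peaks: 1-based index i in {2..n-1}, i.e. 0-based j with 0 < j, j+1 < n *)
definition pk :: "nat list \<Rightarrow> nat" where
  "pk xs = card {j. 0 < j \<and> j + 1 < length xs \<and> xs ! (j - 1) < xs ! j \<and> xs ! j > xs ! (j + 1)}"

definition S_poly :: "nat \<Rightarrow> real poly" where
  "S_poly n = (\<Sum>xs\<in>RS n. monom 1 (des xs))"

definition P_poly :: "nat \<Rightarrow> real poly" where
  "P_poly n = (\<Sum>xs\<in>RS n. monom 1 (pk xs))"

definition P_plus :: "nat \<Rightarrow> real poly" where
  "P_plus n = (\<Sum>xs\<in>RS_plus n. monom 1 (pk xs))"

definition P_minus :: "nat \<Rightarrow> real poly" where
  "P_minus n = (\<Sum>xs\<in>RS_minus n. monom 1 (pk xs))"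

definition RZ :: "real set \<Rightarrow> real poly \<Rightarrow> bool" where
  "RZ I p \<longleftrightarrow> p \<noteq> 0 \<and>
     (\<forall>z::complex. poly (map_poly complex_of_real p) z = 0 \<longrightarrow> (\<exists>x\<in>I. z = complex_of_real x))"

definition zero_list :: "real poly \<Rightarrow> real list \<Rightarrow> bool" where
  "zero_list p xs \<longleftrightarrow> sorted xs \<and> length xs = degree p \<and>
     p = smult (lead_coeff p) (\<Prod>x\<leftarrow>xs. [:- x, 1:])"

definition interlaces :: "real poly \<Rightarrow> real poly \<Rightarrow> bool" where
  "interlaces p q \<longleftrightarrow> degree q = degree p + 1 \<and>
     (\<exists>\<xi> \<theta>. zero_list p \<xi> \<and> zero_list q \<theta> \<and>
        (\<forall>i<length \<xi>. \<theta> ! i \<le> \<xi> ! i \<and> \<xi> ! i \<le> \<theta> ! (i + 1)))"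

definition alternates_left :: "real poly \<Rightarrow> real poly \<Rightarrow> bool" where
  "alternates_left p q \<longleftrightarrow> degree p = degree q \<and>
     (\<exists>\<xi> \<theta>. zero_list p \<xi> \<and> zero_list q \<theta> \<and>
        (\<forall>i<length \<xi>. \<xi> ! i \<le> \<theta> ! i \<and> (i + 1 < length \<xi> \<longrightarrow> \<theta> ! i \<le> \<xi> ! (i + 1))))"

(* p \<prec> q, including the convention a \<prec> bx + c for real constants a, b, c *)
definition prec :: "real poly \<Rightarrow> real poly \<Rightarrow> bool" where
  "prec p q \<longleftrightarrow> interlaces p q \<or> alternates_left p q \<or> (degree p = 0 \<and> degree q \<le> 1)"

end

(*
  Inserting n+1 into a simsun permutation of [n] yields a simsun permutation exactly when it is
  not placed inside a descent, and every simsun permutation of [n+1] arises uniquely this way.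
  Following descents, and whether the permutation starts with a descent, through this insertion
  gives S_{n+1} = (1 + n x) S_n + x (1 - 2 x) S_n' and the closed forms
    P^-_{n+1} = S_n + x S_n',   P^+_{n+1} = n S_n - 2 x S_n',   P_{n+1} = (n + 1) S_n - x S_n';
  peaks enter because, without double descents, every descent other than one in the first
  position sits under a peak.

  Each of these polynomials has the shape Q = (a + c x) S_n + x (b + d x) S_n', so at a root r
  of S_n it takes the value r (b + d r) S_n'(r).  If S_n has simple negative roots, S_n'
  alternates in sign on them, hence so does Q, and the intermediate value theorem, together
  with the sign of Q at 0 or near -infinity, places a root of Q between consecutive roots of
  S_n and possibly one beyond either end.  By induction S_n has n div 2 simple negative roots,
  and comparing degrees yields the interlacings.
*)

theory Submission
  imports Defs
begin

section \<open>Descents and double descents\<close>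

definition descent_set :: "nat list \<Rightarrow> nat set" where
  "descent_set w = {i. i + 1 < length w \<and> w ! (i + 1) < w ! i}"

lemma des_eq_card_descent_set: "des w = card (descent_set w)"
  unfolding des_def descent_set_def by simp

lemma finite_descent_set [simp]: "finite (descent_set w)"
  unfolding descent_set_def by (rule finite_subset[of _ "{..<length w}"]) auto

lemma descent_set_Cons_Cons:
  "descent_set (a # b # r) = (if b < a then {0} else {}) \<union> Suc ` descent_set (b # r)"
  unfolding descent_set_def by (auto simp: image_iff less_Suc_eq_0_disj)

lemma des_Nil [simp]: "des [] = 0" and des_singleton [simp]: "des [a] = 0"
  by (simp_all add: des_def)

lemma des_Cons_Cons [simp]: "des (a # b # r) = (if b < a then 1 else 0) + des (b # r)"
  unfolding des_eq_card_descent_set descent_set_Cons_Cons by (simp add: card_image)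

lemma des_append:
  "des (xs @ ys) = des xs + des ys + (if xs \<noteq> [] \<and> ys \<noteq> [] \<and> hd ys < last xs then 1 else 0)"
proof (induction xs rule: induct_list012)
  case (2 x) then show ?case by (cases ys) auto
qed auto

lemma has_double_descent_Cons_Cons_Cons [simp]:
  "has_double_descent (a # b # c # r) \<longleftrightarrow> (b < a \<and> c < b) \<or> has_double_descent (b # c # r)"
  unfolding has_double_descent_def by (auto simp: less_Suc_eq_0_disj)

lemma has_double_descent_short [simp]:
  "\<not> has_double_descent []" "\<not> has_double_descent [a]" "\<not> has_double_descent [a, b]"
  by (simp_all add: has_double_descent_def)

lemma has_double_descent_append_left:
  "has_double_descent xs \<Longrightarrow> has_double_descent (xs @ ys)"
  unfolding has_double_descent_def by (fastforce simp: nth_append)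

lemma has_double_descent_append_right:
  assumes "has_double_descent ys"
  shows "has_double_descent (xs @ ys)"
proof -
  obtain i where "i + 2 < length ys" "ys ! i > ys ! (i + 1)" "ys ! (i + 1) > ys ! (i + 2)"
    using assms unfolding has_double_descent_def by blast
  then show ?thesis
    unfolding has_double_descent_def by (intro exI[of _ "i + length xs"]) (simp add: nth_append)
qed

lemma has_double_descent_insert_max:
  assumes "\<forall>x\<in>set xs. x < m" "\<forall>y\<in>set ys. y < m"
  shows "has_double_descent (xs @ m # ys) \<longleftrightarrow>
    has_double_descent xs \<or> has_double_descent ys \<or> (\<exists>y1 y2 r. ys = y1 # y2 # r \<and> y2 < y1)"
  using assms
proof (induction xs rule: induct_list012)
  case 1 then show ?case by (cases ys rule: remdups_adj.cases) auto
next
  case (2 x) then show ?case by (cases ys rule: remdups_adj.cases) auto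
next
  case (3 x y zs) then show ?case by (cases zs rule: remdups_adj.cases) auto
qed

lemma des_insert_max:
  assumes "\<forall>x\<in>set xs. x < m" "\<forall>y\<in>set ys. y < m"
  shows "des (xs @ m # ys) = des xs + (if ys = [] then 0 else 1) + des ys"
proof -
  have "\<not> m < last xs" if "xs \<noteq> []" using assms(1) last_in_set[OF that] by fastforce
  then have "des (xs @ m # ys) = des xs + des (m # ys)" using des_append[of xs "m # ys"] by auto
  then show ?thesis using assms(2) by (cases ys) auto
qed

section \<open>Inserting a new maximum\<close>

definition insert_at :: "'a \<Rightarrow> nat \<Rightarrow> 'a list \<Rightarrow> 'a list" where
  "insert_at x j w = take j w @ x # drop j w"

(* Inserting the maximum in front of w ! j with w ! j > w ! (j + 1) would create a double descent. *)
definition slots :: "nat list \<Rightarrow> nat set" where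
  "slots w = {0..length w} - descent_set w"

lemma finite_slots [simp]: "finite (slots w)"
  unfolding slots_def by simp

lemma set_insert_at [simp]: "set (insert_at x j w) = insert x (set w)"
  unfolding insert_at_def by (metis Un_insert_right append_take_drop_id list.simps(15) set_append)

lemma des_insert_at:
  assumes "\<forall>x\<in>set w. x < m" "j \<le> length w"
  shows "des (insert_at m j w) =
    (if j \<in> Suc ` descent_set w \<or> j = length w then des w else Suc (des w))"
proof -
  have bounded: "\<forall>x\<in>set (take j w). x < m" "\<forall>x\<in>set (drop j w). x < m"
    using assms(1) by (auto dest: in_set_takeD in_set_dropD)
  have boundary: "take j w \<noteq> [] \<and> drop j w \<noteq> [] \<and> hd (drop j w) < last (take j w) \<longleftrightarrow>
      j \<in> Suc ` descent_set w"
  proof (cases "0 < j \<and> j < length w")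
    case True
    have "last (take j w) = w ! (j - 1)"
      using True by (cases j) (simp_all add: take_Suc_conv_app_nth)
    moreover have "hd (drop j w) = w ! j"
      using True by (simp add: hd_drop_conv_nth)
    moreover obtain i where "j = Suc i" using True by (cases j) auto
    then have "j \<in> Suc ` descent_set w \<longleftrightarrow> w ! j < w ! (j - 1)"
      using True by (simp add: inj_image_mem_iff descent_set_def)
    ultimately show ?thesis using True by auto
  next
    case False
    then show ?thesis by (auto simp: descent_set_def)
  qed
  have "des (insert_at m j w) = des (take j w) + (if drop j w = [] then 0 else 1) + des (drop j w)"
    unfolding insert_at_def using bounded by (rule des_insert_max)
  moreover have "des w = des (take j w) + des (drop j w) +
      (if take j w \<noteq> [] \<and> drop j w \<noteq> [] \<and> hd (drop j w) < last (take j w) then 1 else 0)"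
    using des_append[of "take j w" "drop j w"] by simp
  moreover have "drop j w = [] \<longleftrightarrow> j = length w" using assms(2) by auto
  moreover have "length w \<notin> Suc ` descent_set w" by (auto simp: descent_set_def)
  ultimately show ?thesis unfolding boundary by auto
qed

lemma Suc_descent_set_subset_slots:
  "\<not> has_double_descent w \<Longrightarrow> Suc ` descent_set w \<subseteq> slots w"
  unfolding slots_def descent_set_def has_double_descent_def by force

lemma first_descent_insert_at:
  fixes w :: "'a :: linorder list"
  assumes "\<forall>x\<in>set w. x < m" "2 \<le> length w"
  shows "insert_at m j w ! 1 < insert_at m j w ! 0 \<longleftrightarrow> j = 0 \<or> (2 \<le> j \<and> w ! 1 < w ! 0)"
proof -
  obtain a b r where w: "w = a # b # r"
    using assms(2) by (metis Suc_le_length_iff numeral_2_eq_2)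
  then show ?thesis
    using assms(1) by (cases j; cases "j - 1") (auto simp: insert_at_def)
qed

section \<open>Simsun permutations built by insertion\<close>

lemma simsun_no_double_descent:
  assumes "simsun n w" "set w \<subseteq> {1..n}"
  shows "\<not> has_double_descent w"
proof (cases "w = []")
  case False
  then have "n \<in> {1..n}" using assms(2) by (cases w) auto
  moreover have "filter (\<lambda>x. x \<le> n) w = w" using assms(2) by (auto simp: filter_id_conv)
  ultimately show ?thesis using assms(1) unfolding simsun_def by metis
qed simp

lemma RS_D:
  assumes "w \<in> RS n"
  shows "length w = n" "distinct w" "set w = {1..n}" "simsun n w" "\<not> has_double_descent w"
proof -
  have perm: "w \<in> permutations_of_set {1..n}" and sim: "simsun n w"
    using assms by (auto simp: RS_def)
  then show "length w = n" "distinct w" "set w = {1..n}" "simsun n w"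
    by (auto simp: length_finite_permutations_of_set permutations_of_set_def)
  then show "\<not> has_double_descent w" using simsun_no_double_descent[OF sim] by simp
qed

lemma finite_RS [simp]: "finite (RS n)"
  unfolding RS_def by simp

lemma bij_betw_insert_at_permutations:
  "bij_betw (\<lambda>(w, j). insert_at (Suc n) j w)
     (permutations_of_set {1..n} \<times> {0..n}) (permutations_of_set {1..Suc n})"
proof (rule bij_betw_imageI)
  show "inj_on (\<lambda>(w, j). insert_at (Suc n) j w) (permutations_of_set {1..n} \<times> {0..n})"
  proof (rule inj_onI, clarify)
    fix w j w' j'
    assume w: "w \<in> permutations_of_set {1..n}" and j: "j \<in> {0..n}"
      and w': "w' \<in> permutations_of_set {1..n}" and j': "j' \<in> {0..n}"
      and eq: "insert_at (Suc n) j w = insert_at (Suc n) j' w'"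
    have "Suc n \<notin> set w" "Suc n \<notin> set w'" using w w' by (auto simp: permutations_of_set_def)
    then have "Suc n \<notin> set (take j w) \<union> set (drop j w)"
      by (auto dest: in_set_takeD in_set_dropD)
    with eq have take: "take j w = take j' w'" and drop: "drop j w = drop j' w'"
      unfolding insert_at_def by (auto simp: append_Cons_eq_iff)
    have "w = w'" using append_take_drop_id[of j w] unfolding take drop by simp
    moreover have "length w = n"
      using w by (simp add: length_finite_permutations_of_set)
    ultimately show "w = w' \<and> j = j'"
      using j j' arg_cong[OF take, of length] by simp
  qed
next
  show "(\<lambda>(w, j). insert_at (Suc n) j w) ` (permutations_of_set {1..n} \<times> {0..n}) =
      permutations_of_set {1..Suc n}"
  proof (rule set_eqI, rule iffI)
    fix p assume "p \<in> (\<lambda>(w, j). insert_at (Suc n) j w) ` (permutations_of_set {1..n} \<times> {0..n})"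
    then obtain w j where w: "w \<in> permutations_of_set {1..n}" and p: "p = insert_at (Suc n) j w"
      by auto
    have "set p = insert (Suc n) {1..n}"
      using w unfolding p by (simp add: permutations_of_set_def)
    moreover have "distinct p"
      using w unfolding p by (auto simp: insert_at_def permutations_of_set_def
          set_take_disj_set_drop_if_distinct dest: in_set_takeD in_set_dropD)
    ultimately show "p \<in> permutations_of_set {1..Suc n}"
      by (auto simp: permutations_of_set_def atLeastAtMostSuc_conv)
  next
    fix p assume p: "p \<in> permutations_of_set {1..Suc n}"
    then have "Suc n \<in> set p" "distinct p" by (auto simp: permutations_of_set_def)
    then obtain xs ys where xs: "p = xs @ Suc n # ys" by (meson split_list)
    have "set (xs @ ys) = set p - {Suc n}" "distinct (xs @ ys)"
      using \<open>distinct p\<close> unfolding xs by auto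
    then have w: "xs @ ys \<in> permutations_of_set {1..n}"
      using p by (auto simp: permutations_of_set_def atLeastAtMostSuc_conv)
    then have "length xs \<in> {0..n}"
      using length_finite_permutations_of_set[OF w] by simp
    moreover have "p = insert_at (Suc n) (length xs) (xs @ ys)" by (simp add: xs insert_at_def)
    ultimately show "p \<in> (\<lambda>(w, j). insert_at (Suc n) j w) ` (permutations_of_set {1..n} \<times> {0..n})"
      using w by force
  qed
qed

lemma simsun_insert_at_iff:
  assumes w: "w \<in> permutations_of_set {1..n}"
  shows "simsun (Suc n) (insert_at (Suc n) j w) \<longleftrightarrow> simsun n w \<and> j \<notin> descent_set w"
proof -
  let ?p = "insert_at (Suc n) j w"
  have set_w: "set w = {1..n}" using w by (simp add: permutations_of_set_def)
  have "filter (\<lambda>x. x \<le> k) ?p = filter (\<lambda>x. x \<le> k) w" if "k \<le> n" for k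
    using that filter_append[of _ "take j w" "drop j w"] unfolding insert_at_def by simp
  moreover have "filter (\<lambda>x. x \<le> Suc n) ?p = ?p"
    using set_w by (auto simp: filter_id_conv)
  ultimately have "simsun (Suc n) ?p \<longleftrightarrow> simsun n w \<and> \<not> has_double_descent ?p"
    unfolding simsun_def by (auto simp: atLeastAtMostSuc_conv)
  moreover have "\<not> has_double_descent ?p \<longleftrightarrow> j \<notin> descent_set w" if "simsun n w"
  proof -
    have "\<not> has_double_descent (take j w @ drop j w)"
      using simsun_no_double_descent[OF that] set_w by simp
    then have "\<not> has_double_descent (take j w)" "\<not> has_double_descent (drop j w)"
      using has_double_descent_append_left has_double_descent_append_right by blast+
    moreover have "(\<exists>y1 y2 r. drop j w = y1 # y2 # r \<and> y2 < y1) \<longleftrightarrow> j \<in> descent_set w"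
    proof (cases "j + 1 < length w")
      case True
      then have "drop j w = w ! j # w ! (j + 1) # drop (j + 2) w"
        by (simp add: Cons_nth_drop_Suc)
      then show ?thesis using True by (simp add: descent_set_def)
    next
      case False
      then have "length (drop j w) \<le> 1" by simp
      then show ?thesis using False by (auto simp: descent_set_def dest: arg_cong[of _ _ length])
    qed
    ultimately show ?thesis
      unfolding insert_at_def using set_w
      by (subst has_double_descent_insert_max) (auto dest: in_set_takeD in_set_dropD)
  qed
  ultimately show ?thesis by blast
qed

lemma bij_betw_insert_at_RS:
  "bij_betw (\<lambda>(w, j). insert_at (Suc n) j w) (Sigma (RS n) slots) (RS (Suc n))"
proof (rule bij_betw_subset[OF bij_betw_insert_at_permutations])
  have slots: "j \<in> slots w \<longleftrightarrow> j \<le> n \<and> j \<notin> descent_set w"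
    if "w \<in> permutations_of_set {1..n}" for w j
    using that by (simp add: slots_def length_finite_permutations_of_set)
  show "Sigma (RS n) slots \<subseteq> permutations_of_set {1..n} \<times> {0..n}"
    using slots by (auto simp: RS_def)
  show "(\<lambda>(w, j). insert_at (Suc n) j w) ` Sigma (RS n) slots = RS (Suc n)"
  proof (rule set_eqI, rule iffI)
    fix p assume "p \<in> (\<lambda>(w, j). insert_at (Suc n) j w) ` Sigma (RS n) slots"
    then obtain w j where w: "w \<in> RS n" and j: "j \<in> slots w" and p: "p = insert_at (Suc n) j w"
      by auto
    have perm: "w \<in> permutations_of_set {1..n}" using w by (simp add: RS_def)
    have "p \<in> permutations_of_set {1..Suc n}"
      using bij_betw_apply[OF bij_betw_insert_at_permutations, of "(w, j)"] perm j slots[OF perm]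
      unfolding p by simp
    moreover have "simsun (Suc n) p"
      using w j slots[OF perm] unfolding p simsun_insert_at_iff[OF perm] by (simp add: RS_def)
    ultimately show "p \<in> RS (Suc n)" by (simp add: RS_def)
  next
    fix p assume p: "p \<in> RS (Suc n)"
    then have "p \<in> (\<lambda>(w, j). insert_at (Suc n) j w) ` (permutations_of_set {1..n} \<times> {0..n})"
      using bij_betw_imp_surj_on[OF bij_betw_insert_at_permutations] by (simp add: RS_def)
    then obtain w j where perm: "w \<in> permutations_of_set {1..n}" and j: "j \<le> n"
      and p_eq: "p = insert_at (Suc n) j w"
      by auto
    have "simsun (Suc n) (insert_at (Suc n) j w)" using p unfolding p_eq by (simp add: RS_def)
    then have "simsun n w \<and> j \<notin> descent_set w" by (simp add: simsun_insert_at_iff[OF perm])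
    then have "(w, j) \<in> Sigma (RS n) slots"
      using perm j slots[OF perm] by (simp add: RS_def)
    then show "p \<in> (\<lambda>(w, j). insert_at (Suc n) j w) ` Sigma (RS n) slots"
      unfolding p_eq by force
  qed
qed

lemma sum_RS_Suc:
  "(\<Sum>p\<in>RS (Suc n). f p) = (\<Sum>w\<in>RS n. \<Sum>j\<in>slots w. f (insert_at (Suc n) j w))"
proof -
  have "(\<Sum>p\<in>RS (Suc n). f p) = (\<Sum>(w, j)\<in>Sigma (RS n) slots. f (insert_at (Suc n) j w))"
    using sum.reindex_bij_betw[OF bij_betw_insert_at_RS, of f] by (simp add: split_def)
  also have "\<dots> = (\<Sum>w\<in>RS n. \<Sum>j\<in>slots w. f (insert_at (Suc n) j w))"
    by (rule sum.Sigma[symmetric]) simp_all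
  finally show ?thesis .
qed

section \<open>A first-order differential operator on polynomials\<close>

definition diff_op :: "real \<Rightarrow> real \<Rightarrow> real \<Rightarrow> real \<Rightarrow> real poly \<Rightarrow> real poly" where
  "diff_op a b c d p = [:a, c:] * p + [:0, b, d:] * pderiv p"

lemma poly_diff_op [simp]:
  "poly (diff_op a b c d p) x = (a + c * x) * poly p x + (b * x + d * x\<^sup>2) * poly (pderiv p) x"
  by (simp add: diff_op_def power2_eq_square algebra_simps)

lemma diff_op_add: "diff_op a b c d (p + q) = diff_op a b c d p + diff_op a b c d q"
  by (simp add: diff_op_def pderiv_add distrib_left)

lemma diff_op_sum: "diff_op a b c d (\<Sum>x\<in>A. f x) = (\<Sum>x\<in>A. diff_op a b c d (f x))"
proof (induction A rule: infinite_finite_induct)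
  case (insert x F) then show ?case by (simp add: diff_op_add)
qed (simp_all add: diff_op_def)

lemma coeff_diff_op_0: "coeff (diff_op a b c d p) 0 = a * coeff p 0"
  by (simp add: diff_op_def coeff_pCons)

lemma coeff_diff_op_Suc:
  "coeff (diff_op a b c d p) (Suc k) =
     (a + b * of_nat (Suc k)) * coeff p (Suc k) + (c + d * of_nat k) * coeff p k"
  by (cases k) (simp_all add: diff_op_def coeff_pCons coeff_pderiv algebra_simps)

lemma diff_op_monom:
  "diff_op a b c d (monom 1 k) =
     smult (a + b * of_nat k) (monom 1 k) + smult (c + d * of_nat k) (monom 1 (Suc k))"
proof (rule poly_eqI)
  fix i show "coeff (diff_op a b c d (monom 1 k)) i =
      coeff (smult (a + b * of_nat k) (monom 1 k) + smult (c + d * of_nat k) (monom 1 (Suc k))) i"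
    by (cases i) (auto simp: coeff_diff_op_0 coeff_diff_op_Suc)
qed

lemma degree_diff_op_le:
  assumes "degree p \<le> d" "c + e * of_nat d = 0"
  shows "degree (diff_op a b c e p) \<le> d"
proof (rule degree_le, intro allI impI)
  fix i assume "d < i"
  then obtain k where k: "i = Suc k" "d \<le> k" by (cases i) auto
  have "coeff p (Suc k) = 0" using k assms(1) by (simp add: coeff_eq_0)
  moreover have "(c + e * of_nat k) * coeff p k = 0"
    using assms k by (cases "k = d") (simp_all add: coeff_eq_0)
  ultimately show "coeff (diff_op a b c e p) i = 0" unfolding k coeff_diff_op_Suc by simp
qed

lemma degree_diff_op_le_Suc: "degree (diff_op a b c e p) \<le> Suc (degree p)"
proof (rule degree_le, intro allI impI)
  fix i assume "Suc (degree p) < i"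
  then obtain k where "i = Suc k" "degree p < k" by (cases i) auto
  then show "coeff (diff_op a b c e p) i = 0" by (simp add: coeff_diff_op_Suc coeff_eq_0)
qed

lemma coeff_diff_op_degree:
  "coeff (diff_op a b 0 0 p) (degree p) = (a + b * of_nat (degree p)) * lead_coeff p"
  by (cases "degree p") (simp_all add: coeff_diff_op_0 coeff_diff_op_Suc)

lemma coeff_diff_op_Suc_degree:
  "coeff (diff_op a b c e p) (Suc (degree p)) = (c + e * of_nat (degree p)) * lead_coeff p"
  by (simp add: coeff_diff_op_Suc coeff_eq_0)

lemma degree_eq_if_coeff_nonzero:
  "degree p \<le> d \<Longrightarrow> coeff p d \<noteq> 0 \<Longrightarrow> degree p = d \<and> lead_coeff p = coeff p d"
  using le_degree by fastforce

section \<open>Descent and peak polynomials\<close>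

lemma sum_slots_des:
  assumes w: "w \<in> RS n"
  shows "(\<Sum>j\<in>slots w. monom 1 (des (insert_at (Suc n) j w))) =
    diff_op 1 1 n (-2) (monom 1 (des w))"
proof -
  let ?d = "des w" and ?D = "descent_set w"
  let ?same = "insert (length w) (Suc ` ?D)"
  have len: "length w = n" and bounded: "\<forall>x\<in>set w. x < Suc n"
    using RS_D[OF w] by auto
  have same: "?same \<subseteq> slots w"
    using Suc_descent_set_subset_slots[OF RS_D(5)[OF w]] by (auto simp: slots_def)
  have des_ins: "des (insert_at (Suc n) j w) = (if j \<in> ?same then ?d else Suc ?d)"
    if "j \<in> slots w" for j
    using des_insert_at[OF bounded, of j] that by (auto simp: slots_def)
  have "length w \<notin> Suc ` ?D" by (auto simp: descent_set_def)
  then have card_same: "card ?same = Suc ?d" by (simp add: card_image des_eq_card_descent_set)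
  have "card (slots w) + ?d = Suc n"
  proof -
    have "?D \<subseteq> {0..length w}" by (auto simp: descent_set_def)
    then show ?thesis
      using card_Diff_subset[of ?D "{0..length w}"] card_mono[of "{0..length w}" ?D] len
      by (simp add: slots_def des_eq_card_descent_set)
  qed
  then have card_rest: "real (card (slots w - ?same)) = real n - 2 * real ?d"
    using card_Diff_subset[OF finite_subset[OF same finite_slots] same]
      card_mono[OF finite_slots same] card_same by (simp add: of_nat_diff)
  have "(\<Sum>j\<in>slots w. monom (1::real) (des (insert_at (Suc n) j w))) =
      (\<Sum>j\<in>slots w - ?same. monom 1 (Suc ?d)) + (\<Sum>j\<in>?same. monom 1 ?d)"
    unfolding sum.subset_diff[OF same finite_slots] using same
    by (intro arg_cong2[where f = "(+)"] sum.cong) (auto simp: des_ins)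
  also have "\<dots> = smult (real n - 2 * real ?d) (monom 1 (Suc ?d)) + smult (real (Suc ?d)) (monom 1 ?d)"
    unfolding sum_constant card_rest[symmetric] card_same[symmetric] by (simp add: of_nat_poly)
  finally show ?thesis by (simp add: diff_op_monom algebra_simps)
qed

lemma sum_slots_des_first_descent:
  assumes w: "w \<in> RS n" and n: "2 \<le> n"
  shows "(\<Sum>j\<in>slots w. if insert_at (Suc n) j w ! 1 < insert_at (Suc n) j w ! 0
            then monom 1 (des (insert_at (Suc n) j w)) else 0) =
    (if w ! 1 < w ! 0 then diff_op 0 1 n (-2) (monom 1 (des w)) else monom 1 (Suc (des w)))"
    (is "(\<Sum>j\<in>slots w. if ?first j then ?f j else 0) = _")
proof -
  have len: "length w = n" and bounded: "\<forall>x\<in>set w. x < Suc n"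
    using RS_D[OF w] by auto
  have first: "?first j \<longleftrightarrow> j = 0 \<or> (2 \<le> j \<and> w ! 1 < w ! 0)" for j
    using first_descent_insert_at[OF bounded] len n by simp
  have "w ! 0 \<noteq> w ! 1"
    using RS_D(2)[OF w] len n by (simp add: nth_eq_iff_index_eq)
  then consider "w ! 1 < w ! 0" | "w ! 0 < w ! 1" by linarith
  then show ?thesis
  proof cases
    case 1
    then have "0 \<in> descent_set w" using len n by (simp add: descent_set_def)
    then have "1 \<in> Suc ` descent_set w" "0 \<notin> slots w" by (auto simp: slots_def)
    then have "1 \<in> slots w" and f1: "?f 1 = monom 1 (des w)"
      using Suc_descent_set_subset_slots[OF RS_D(5)[OF w]] des_insert_at[OF bounded, of 1] len n
      by auto
    have "slots w \<inter> {j. ?first j} = slots w - {1}"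
    proof (intro set_eqI iffI)
      fix j assume "j \<in> slots w - {1}"
      then have "2 \<le> j" using \<open>0 \<notin> slots w\<close> by (cases j) auto
      then show "j \<in> slots w \<inter> {j. ?first j}" using \<open>j \<in> slots w - {1}\<close> 1 first by simp
    next
      fix j assume j: "j \<in> slots w \<inter> {j. ?first j}"
      then have "j = 0 \<or> 2 \<le> j" using first by blast
      then show "j \<in> slots w - {1}" using j by auto
    qed
    then have "(\<Sum>j\<in>slots w. if ?first j then ?f j else 0) = (\<Sum>j\<in>slots w. ?f j) - ?f 1"
      using sum.inter_filter[of "slots w" ?f ?first] sum_diff1[of "slots w" ?f 1] \<open>1 \<in> slots w\<close>
      by (simp add: Int_def)
    then show ?thesis
      using 1 f1 sum_slots_des[OF w] by (simp add: diff_op_monom smult_add_left)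
  next
    case 2
    then have "0 \<in> slots w" "0 \<notin> Suc ` descent_set w" "length w \<noteq> 0"
      using len n by (auto simp: slots_def descent_set_def)
    then have "slots w \<inter> {j. ?first j} = {0}" and "?f 0 = monom 1 (Suc (des w))"
      using 2 first des_insert_at[OF bounded, of 0] by auto
    then show ?thesis
      using 2 sum.inter_filter[of "slots w" ?f ?first] by (simp add: Int_def)
  qed
qed

definition S_plus :: "nat \<Rightarrow> real poly" where
  "S_plus n = (\<Sum>xs\<in>RS_plus n. monom 1 (des xs))"

definition S_minus :: "nat \<Rightarrow> real poly" where
  "S_minus n = (\<Sum>xs\<in>RS_minus n. monom 1 (des xs))"

lemma sum_RS_split:
  assumes "2 \<le> n"
  shows "(\<Sum>w\<in>RS n. f w) = (\<Sum>w\<in>RS_plus n. f w) + (\<Sum>w\<in>RS_minus n. f w)"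
proof -
  have "w ! 0 \<noteq> w ! 1" if "w \<in> RS n" for w
    using RS_D(1,2)[OF that] assms by (simp add: nth_eq_iff_index_eq)
  then have "RS_plus n = RS n \<inter> {w. w ! 1 < w ! 0}" "RS_minus n = RS n - {w. w ! 1 < w ! 0}"
    by (auto simp: RS_plus_def RS_minus_def order.strict_iff_not)
  then show ?thesis by (simp add: sum.Int_Diff[of "RS n" _ "{w. w ! 1 < w ! 0}"])
qed

lemma S_poly_split: "2 \<le> n \<Longrightarrow> S_poly n = S_plus n + S_minus n"
  unfolding S_poly_def S_plus_def S_minus_def by (rule sum_RS_split)

lemma P_poly_split: "2 \<le> n \<Longrightarrow> P_poly n = P_plus n + P_minus n"
  unfolding P_poly_def P_plus_def P_minus_def by (rule sum_RS_split)

lemma S_poly_Suc: "S_poly (Suc n) = diff_op 1 1 n (-2) (S_poly n)"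
  unfolding S_poly_def sum_RS_Suc diff_op_sum by (simp add: sum_slots_des)

lemma S_plus_Suc:
  assumes "2 \<le> n"
  shows "S_plus (Suc n) = [:0, 1:] * S_minus n + diff_op 0 1 n (-2) (S_plus n)"
proof -
  have "S_plus (Suc n) = (\<Sum>p\<in>RS (Suc n). if p ! 1 < p ! 0 then monom 1 (des p) else 0)"
    unfolding S_plus_def RS_plus_def by (simp add: sum.inter_filter)
  also have "\<dots> = (\<Sum>w\<in>RS n. if w ! 1 < w ! 0 then diff_op 0 1 n (-2) (monom 1 (des w))
      else [:0, 1:] * monom 1 (des w))"
    unfolding sum_RS_Suc
    by (intro sum.cong) (simp_all add: sum_slots_des_first_descent[OF _ assms, simplified] monom_Suc)
  also have "\<dots> = [:0, 1:] * S_minus n + diff_op 0 1 n (-2) (S_plus n)"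
    unfolding sum_RS_split[OF assms] S_plus_def S_minus_def diff_op_sum sum_distrib_left
    by (simp add: RS_plus_def RS_minus_def)
  finally show ?thesis .
qed

lemma S_plus_S_minus_Suc:
  assumes n: "2 \<le> n"
    and inv: "pderiv (S_plus n) = smult (real n - 1) (S_minus n) - [:0, 2:] * pderiv (S_minus n)"
  shows "S_plus (Suc n) = [:0, 1:] * diff_op n (-2) 0 0 (S_poly n)"
    and "S_minus (Suc n) = diff_op 1 1 0 0 (S_poly n)"
proof -
  show plus: "S_plus (Suc n) = [:0, 1:] * diff_op n (-2) 0 0 (S_poly n)"
    unfolding S_plus_Suc[OF n] S_poly_split[OF n]
    by (rule poly_ext) (simp add: inv pderiv_add algebra_simps power2_eq_square)
  have "S_minus (Suc n) = S_poly (Suc n) - S_plus (Suc n)"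
    using S_poly_split[of "Suc n"] n by simp
  also have "\<dots> = diff_op 1 1 0 0 (S_poly n)"
    unfolding plus S_poly_Suc by (rule poly_ext) (simp add: algebra_simps power2_eq_square)
  finally show "S_minus (Suc n) = diff_op 1 1 0 0 (S_poly n)" .
qed

lemma simsun_length_le_2:
  assumes "length xs \<le> 2"
  shows "simsun n xs"
  unfolding simsun_def
proof
  fix k
  have "length (filter (\<lambda>x. x \<le> k) xs) \<le> 2"
    using assms length_filter_le order.trans by blast
  then show "\<not> has_double_descent (filter (\<lambda>x. x \<le> k) xs)"
    by (auto simp: has_double_descent_def)
qed

lemma RS_2: "RS 2 = {[1, 2], [2, 1]}"
proof -
  have "{1..2::nat} = {1, 2}" by auto
  then have "permutations_of_set {1..2::nat} = {[1, 2], [2, 1]}"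
    by (simp add: permutations_of_set_doubleton)
  moreover have "simsun 2 [1, 2]" "simsun 2 [2, 1]" by (simp_all add: simsun_length_le_2)
  ultimately show ?thesis by (auto simp: RS_def)
qed

lemma RS_plus_2: "RS_plus 2 = {[2, 1]}" and RS_minus_2: "RS_minus 2 = {[1, 2]}"
  by (auto simp: RS_plus_def RS_minus_def RS_2)

lemma S_plus_2: "S_plus 2 = [:0, 1:]" and S_minus_2: "S_minus 2 = 1"
  by (simp_all add: S_plus_def S_minus_def RS_plus_2 RS_minus_2 monom_Suc)

lemma pderiv_S_plus:
  "2 \<le> n \<Longrightarrow>
    pderiv (S_plus n) = smult (real n - 1) (S_minus n) - [:0, 2:] * pderiv (S_minus n)"
proof (induction n rule: dec_induct)
  case base
  then show ?case by (simp add: S_plus_2 S_minus_2 pderiv_pCons)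
next
  case (step n)
  show ?case
    unfolding S_plus_S_minus_Suc[OF step.hyps(1) step.IH] diff_op_def
    by (simp add: pderiv_mult pderiv_add pderiv_minus pderiv_pCons pderiv_smult smult_add_right)
qed

lemma des_eq_pk:
  assumes w: "w \<in> RS m" and m: "2 \<le> m"
  shows "des w = pk w + (if w ! 1 < w ! 0 then 1 else 0)"
proof -
  have peaks: "{j. 0 < j \<and> j + 1 < length w \<and> w ! (j - 1) < w ! j \<and> w ! j > w ! (j + 1)} =
      descent_set w - {0}"
  proof (intro set_eqI iffI)
    fix j assume j: "j \<in> descent_set w - {0}"
    have "\<not> w ! j < w ! (j - 1)"
    proof
      assume "w ! j < w ! (j - 1)"
      then have "has_double_descent w"
        unfolding has_double_descent_def using j
        by (intro exI[of _ "j - 1"]) (auto simp: descent_set_def)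
      then show False using RS_D(5)[OF w] by simp
    qed
    moreover have "w ! (j - 1) \<noteq> w ! j"
      using j RS_D(2)[OF w] by (auto simp: descent_set_def nth_eq_iff_index_eq)
    ultimately show "j \<in> {j. 0 < j \<and> j + 1 < length w \<and> w ! (j - 1) < w ! j \<and> w ! j > w ! (j + 1)}"
      using j by (auto simp: descent_set_def)
  qed (auto simp: descent_set_def)
  have "0 \<in> descent_set w \<longleftrightarrow> w ! 1 < w ! 0"
    using RS_D(1)[OF w] m by (simp add: descent_set_def)
  moreover have "card (descent_set w) = Suc (card (descent_set w - {0}))" if "0 \<in> descent_set w"
    using card_Suc_Diff1[OF finite_descent_set that] by simp
  ultimately show ?thesis
    unfolding des_eq_card_descent_set pk_def peaks by auto
qed

lemma P_minus_eq_S_minus: "2 \<le> m \<Longrightarrow> P_minus m = S_minus m"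
  unfolding P_minus_def S_minus_def
  by (intro sum.cong) (auto simp: RS_minus_def des_eq_pk)

lemma S_plus_eq_P_plus: "2 \<le> m \<Longrightarrow> S_plus m = [:0, 1:] * P_plus m"
  unfolding P_plus_def S_plus_def sum_distrib_left
  by (intro sum.cong) (auto simp: RS_plus_def des_eq_pk monom_Suc)

lemma P_minus_Suc: "2 \<le> n \<Longrightarrow> P_minus (Suc n) = diff_op 1 1 0 0 (S_poly n)"
  using P_minus_eq_S_minus[of "Suc n"] S_plus_S_minus_Suc(2)[OF _ pderiv_S_plus] by simp

lemma P_plus_Suc: "2 \<le> n \<Longrightarrow> P_plus (Suc n) = diff_op n (-2) 0 0 (S_poly n)"
  using S_plus_eq_P_plus[of "Suc n"] S_plus_S_minus_Suc(1)[OF _ pderiv_S_plus] by simp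

lemma P_poly_Suc:
  assumes "2 \<le> n"
  shows "P_poly (Suc n) = diff_op (n + 1) (-1) 0 0 (S_poly n)"
proof -
  have "P_poly (Suc n) = diff_op n (-2) 0 0 (S_poly n) + diff_op 1 1 0 0 (S_poly n)"
    using P_poly_split[of "Suc n"] P_plus_Suc[OF assms] P_minus_Suc[OF assms] assms by simp
  then show ?thesis by (intro poly_ext) (simp add: algebra_simps)
qed

lemma P_polys_2: "P_poly 2 = 2" "P_plus 2 = 1" "P_minus 2 = 1"
proof -
  show minus: "P_minus 2 = 1" using P_minus_eq_S_minus[of 2] S_minus_2 by simp
  show plus: "P_plus 2 = 1" using S_plus_eq_P_plus[of 2] S_plus_2 by (simp add: one_pCons)
  show "P_poly 2 = 2" using P_poly_split[of 2] plus minus by simp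
qed

section \<open>Polynomials with simple negative roots\<close>

abbreviation linear_factors :: "real list \<Rightarrow> real poly" where
  "linear_factors rs \<equiv> (\<Prod>r\<leftarrow>rs. [:- r, 1:])"

definition has_simple_neg_roots :: "real poly \<Rightarrow> real list \<Rightarrow> bool" where
  "has_simple_neg_roots p rs \<longleftrightarrow> 0 < lead_coeff p \<and> sorted_wrt (<) rs \<and> (\<forall>r\<in>set rs. r < 0) \<and>
     p = smult (lead_coeff p) (linear_factors rs)"

lemma poly_linear_factors: "poly (linear_factors rs) x = (\<Prod>r\<leftarrow>rs. x - r)"
  by (induction rs) (auto simp: algebra_simps)

lemma linear_factors_nonzero [simp]: "linear_factors rs \<noteq> 0"
  by (induction rs) (simp_all del: mult_pCons_left)

lemma degree_linear_factors [simp]: "degree (linear_factors rs) = length rs"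
  by (induction rs) (simp_all add: degree_mult_eq del: mult_pCons_left)

lemma linear_factors_pos: "\<forall>r\<in>set rs. r < x \<Longrightarrow> 0 < poly (linear_factors rs) x"
  by (induction rs) auto

lemma linear_factors_sign: "\<forall>r\<in>set rs. x < r \<Longrightarrow> 0 < (-1) ^ length rs * poly (linear_factors rs) x"
proof (induction rs)
  case (Cons r rs)
  then have "0 < ((-1) ^ length rs * poly (linear_factors rs) x) * (r - x)" by simp
  then show ?case by (simp add: algebra_simps)
qed simp

lemma map_poly_of_real_mult:
  "map_poly complex_of_real (p * q) = map_poly of_real p * map_poly of_real q"
  by (rule poly_eqI) (simp add: coeff_map_poly coeff_mult)

lemma poly_map_linear_factors:
  "poly (map_poly complex_of_real (linear_factors rs)) z = (\<Prod>r\<leftarrow>rs. z - of_real r)"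
  by (induction rs) (simp_all add: map_poly_of_real_mult map_poly_pCons del: mult_pCons_left)

context
  fixes p :: "real poly" and rs :: "real list"
  assumes p: "has_simple_neg_roots p rs"
begin

lemma has_simple_neg_rootsD:
  "0 < lead_coeff p" "sorted_wrt (<) rs" "\<forall>r\<in>set rs. r < 0"
  "p = smult (lead_coeff p) (linear_factors rs)"
  using p unfolding has_simple_neg_roots_def by blast+

lemma has_simple_neg_roots_nonzero: "p \<noteq> 0"
  using has_simple_neg_rootsD(1) by auto

lemma poly_has_simple_neg_roots: "poly p x = lead_coeff p * (\<Prod>r\<leftarrow>rs. x - r)"
proof -
  have "poly p x = poly (smult (lead_coeff p) (linear_factors rs)) x"
    using p unfolding has_simple_neg_roots_def by (metis (no_types))
  then show ?thesis by (simp add: poly_linear_factors)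
qed

lemma has_simple_neg_roots_degree: "degree p = length rs"
proof -
  have "degree p = degree (smult (lead_coeff p) (linear_factors rs))"
    using p unfolding has_simple_neg_roots_def by (metis (no_types))
  also have "\<dots> = length rs"
    using has_simple_neg_rootsD(1) by (cases "p = 0") simp_all
  finally show ?thesis .
qed

lemma has_simple_neg_roots_root: "r \<in> set rs \<Longrightarrow> poly p r = 0"
  by (simp add: poly_has_simple_neg_roots prod_list_zero_iff)

lemma has_simple_neg_roots_poly_0: "0 < poly p 0"
  using has_simple_neg_rootsD linear_factors_pos[of rs 0]
  by (simp add: poly_has_simple_neg_roots poly_linear_factors)

lemma has_simple_neg_roots_zero_list: "zero_list p rs"
  using p sorted_wrt_mono_rel[of rs "(<)" "(\<le>)"] has_simple_neg_roots_degree
  by (auto simp: has_simple_neg_roots_def zero_list_def)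

lemma has_simple_neg_roots_RZ: "RZ {..<0} p"
  unfolding RZ_def
proof (intro conjI allI impI)
  show "p \<noteq> 0" by (rule has_simple_neg_roots_nonzero)
  fix z :: complex assume z: "poly (map_poly complex_of_real p) z = 0"
  have "map_poly complex_of_real p = map_poly of_real (smult (lead_coeff p) (linear_factors rs))"
    using p unfolding has_simple_neg_roots_def by (metis (no_types))
  then have "poly (map_poly complex_of_real p) z = of_real (lead_coeff p) * (\<Prod>r\<leftarrow>rs. z - of_real r)"
    by (simp add: map_poly_smult poly_map_linear_factors)
  then obtain r where "r \<in> set rs" "z = of_real r"
    using z has_simple_neg_rootsD(1) by (auto simp: prod_list_zero_iff)
  then show "\<exists>x\<in>{..<0}. z = complex_of_real x"
    using has_simple_neg_rootsD(3) by auto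
qed

lemma pderiv_sign_at_root:
  assumes i: "i < length rs"
  shows "0 < (-1) ^ (length rs - 1 - i) * poly (pderiv p) (rs ! i)"
proof -
  let ?r = "rs ! i" and ?as = "take i rs" and ?bs = "drop (Suc i) rs"
  have split: "rs = ?as @ ?r # ?bs" using i by (rule id_take_nth_drop)
  then have "sorted_wrt (<) (?as @ ?r # ?bs)" using has_simple_neg_rootsD(2) by simp
  then have as: "\<forall>a\<in>set ?as. a < ?r" and bs: "\<forall>b\<in>set ?bs. ?r < b"
    by (auto simp: sorted_wrt_append)
  define R where "R = linear_factors ?as * linear_factors ?bs"
  have "linear_factors rs = linear_factors (?as @ ?r # ?bs)"
    using split by (rule arg_cong)
  also have "\<dots> = [:- ?r, 1:] * R"
    unfolding R_def by (simp add: mult.left_commute del: mult_pCons_left)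
  finally have "pderiv p = pderiv (smult (lead_coeff p) ([:- ?r, 1:] * R))"
    using has_simple_neg_rootsD(4) by (metis (no_types))
  then have "poly (pderiv p) ?r = lead_coeff p * poly R ?r"
    by (simp add: pderiv_smult pderiv_mult pderiv_pCons del: mult_pCons_left)
  then have "(-1) ^ (length rs - 1 - i) * poly (pderiv p) ?r =
      lead_coeff p * poly (linear_factors ?as) ?r * ((-1) ^ length ?bs * poly (linear_factors ?bs) ?r)"
    by (simp add: R_def)
  moreover have "0 < poly (linear_factors ?as) ?r" using as by (rule linear_factors_pos)
  moreover have "0 < (-1) ^ length ?bs * poly (linear_factors ?bs) ?r" using bs by (rule linear_factors_sign)
  ultimately show ?thesis using has_simple_neg_rootsD(1) by (metis mult_pos_pos)
qed

end

definition alternating_signs :: "real poly \<Rightarrow> real \<Rightarrow> real list \<Rightarrow> bool" where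
  "alternating_signs q s ps \<longleftrightarrow> (\<forall>i<length ps. 0 < s * (-1) ^ (length ps - 1 - i) * poly q (ps ! i))"

lemma alternating_signs_Cons:
  assumes "alternating_signs q s ps" "0 < s * (-1) ^ length ps * poly q x"
  shows "alternating_signs q s (x # ps)"
  unfolding alternating_signs_def
proof (intro allI impI)
  fix i assume "i < length (x # ps)"
  then show "0 < s * (-1) ^ (length (x # ps) - 1 - i) * poly q ((x # ps) ! i)"
    using assms by (cases i) (simp_all add: alternating_signs_def)
qed

lemma alternating_signs_snoc:
  assumes "alternating_signs q s ps" "0 < - s * poly q x"
  shows "alternating_signs q (- s) (ps @ [x])"
  unfolding alternating_signs_def
proof (intro allI impI)
  fix i assume "i < length (ps @ [x])"
  then consider "i < length ps" | "i = length ps" by fastforce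
  then show "0 < - s * (-1) ^ (length (ps @ [x]) - 1 - i) * poly q ((ps @ [x]) ! i)"
  proof cases
    case 1
    then have "0 < s * (-1) ^ (length ps - 1 - i) * poly q (ps ! i)"
      using assms(1) by (simp add: alternating_signs_def)
    moreover have "length (ps @ [x]) - 1 - i = Suc (length ps - 1 - i)" using 1 by simp
    ultimately show ?thesis using 1 by (simp add: nth_append)
  qed (use assms(2) in simp)
qed

lemma alternating_signs_sign_change:
  assumes "alternating_signs q s ps" "Suc i < length ps"
  shows "poly q (ps ! i) * poly q (ps ! Suc i) < 0"
proof -
  define k where "k = length ps - 1 - Suc i"
  have "length ps - 1 - i = Suc k" using assms(2) by (simp add: k_def)
  then have "0 < s * (-1) ^ Suc k * poly q (ps ! i)" "0 < s * (-1) ^ k * poly q (ps ! Suc i)"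
    using assms unfolding alternating_signs_def k_def by (metis Suc_lessD, simp)
  then have "0 < (s * (-1) ^ Suc k * poly q (ps ! i)) * (s * (-1) ^ k * poly q (ps ! Suc i))"
    by (rule mult_pos_pos)
  also have "\<dots> = - ((s * (-1) ^ k) * (s * (-1) ^ k) * (poly q (ps ! i) * poly q (ps ! Suc i)))"
    by (simp add: algebra_simps)
  finally have "(s * (-1) ^ k) * (s * (-1) ^ k) * (poly q (ps ! i) * poly q (ps ! Suc i)) < 0"
    by linarith
  then show ?thesis by (auto simp: mult_less_0_iff)
qed

lemma eq_smult_linear_factors:
  fixes q :: "real poly"
  assumes "q \<noteq> 0" "degree q \<le> length zs" "sorted_wrt (<) zs" "\<forall>z\<in>set zs. poly q z = 0"
  shows "degree q = length zs \<and> q = smult (lead_coeff q) (linear_factors zs)"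
  using assms
proof (induction zs arbitrary: q)
  case Nil
  then show ?case by (auto elim: degree_eq_zeroE)
next
  case (Cons z zs)
  obtain q' where q: "q = [:- z, 1:] * q'"
    using Cons.prems(4) by (auto simp: poly_eq_0_iff_dvd elim: dvdE)
  have "q' \<noteq> 0" using Cons.prems(1) q by auto
  then have deg: "degree q = Suc (degree q')" unfolding q by (subst degree_mult_eq) auto
  have "degree q' \<le> length zs" using Cons.prems(2) deg by simp
  moreover have "sorted_wrt (<) zs" using Cons.prems(3) by simp
  moreover have "\<forall>y\<in>set zs. poly q' y = 0"
    using Cons.prems(3,4) by (auto simp: q)
  ultimately have ih: "degree q' = length zs \<and> q' = smult (lead_coeff q') (linear_factors zs)"
    by (rule Cons.IH[OF \<open>q' \<noteq> 0\<close>])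
  define c where "c = lead_coeff q'"
  have lc: "lead_coeff q = c" unfolding q lead_coeff_mult c_def by simp
  have eq: "q = smult c (linear_factors (z # zs))"
    unfolding q using ih[folded c_def] by (simp del: mult_pCons_left)
  show ?case
  proof
    show "degree q = length (z # zs)" using deg ih by simp
    show "q = smult (lead_coeff q) (linear_factors (z # zs))" unfolding lc by (rule eq)
  qed
qed

lemma interleaved_roots_if_sign_changes:
  fixes q :: "real poly"
  assumes ps: "sorted_wrt (<) ps" and signs: "alternating_signs q s ps"
  shows "\<exists>zs. length zs = length ps - 1 \<and> sorted_wrt (<) zs \<and> (\<forall>z\<in>set zs. poly q z = 0) \<and>
    (\<forall>i<length zs. ps ! i < zs ! i \<and> zs ! i < ps ! Suc i)"
proof -
  have "\<forall>i<length ps - 1. \<exists>z. ps ! i < z \<and> z < ps ! Suc i \<and> poly q z = 0"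
  proof (intro allI impI)
    fix i assume i: "i < length ps - 1"
    then have "ps ! i < ps ! Suc i" using ps by (simp add: sorted_wrt_nth_less)
    then show "\<exists>z. ps ! i < z \<and> z < ps ! Suc i \<and> poly q z = 0"
      using poly_IVT alternating_signs_sign_change[OF signs, of i] i by fastforce
  qed
  then obtain f where f: "\<forall>i<length ps - 1. ps ! i < f i \<and> f i < ps ! Suc i \<and> poly q (f i) = 0"
    by metis
  define zs where "zs = map f [0..<length ps - 1]"
  have between: "\<forall>i<length zs. ps ! i < zs ! i \<and> zs ! i < ps ! Suc i"
    using f by (auto simp: zs_def)
  have "sorted_wrt (<) zs"
    unfolding sorted_wrt_iff_nth_less
  proof (intro allI impI)
    fix i j assume ij: "i < j" "j < length zs"
    then have "ps ! Suc i \<le> ps ! j"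
      using ps by (cases "Suc i = j") (auto simp: zs_def sorted_wrt_nth_less less_imp_le)
    then show "zs ! i < zs ! j" using between ij by (meson less_trans order.strict_trans1)
  qed
  moreover have "\<forall>z\<in>set zs. poly q z = 0" using f by (auto simp: zs_def)
  ultimately show ?thesis using between by (intro exI[of _ zs]) (simp add: zs_def)
qed

lemma roots_between_sign_changes:
  fixes q :: "real poly"
  assumes ps: "sorted_wrt (<) ps" "\<forall>x\<in>set ps. x \<le> 0" and signs: "alternating_signs q s ps"
    and deg: "degree q < length ps" and pos: "0 < lead_coeff q \<or> 0 < poly q 0"
  shows "\<exists>zs. has_simple_neg_roots q zs \<and> length zs = length ps - 1 \<and>
    (\<forall>i<length zs. ps ! i < zs ! i \<and> zs ! i < ps ! Suc i)"
proof -
  obtain zs where len: "length zs = length ps - 1" and sorted: "sorted_wrt (<) zs"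
    and roots: "\<forall>z\<in>set zs. poly q z = 0"
    and between: "\<forall>i<length zs. ps ! i < zs ! i \<and> zs ! i < ps ! Suc i"
    using interleaved_roots_if_sign_changes[OF ps(1) signs] by blast
  have neg: "\<forall>z\<in>set zs. z < 0"
  proof
    fix z assume "z \<in> set zs"
    then obtain i where i: "i < length zs" "z = zs ! i" by (auto simp: in_set_conv_nth)
    then have "ps ! Suc i \<le> 0" using ps(2) len by (simp add: nth_mem)
    then show "z < 0" using between i by force
  qed
  have "q \<noteq> 0" using pos by auto
  moreover have "degree q \<le> length zs" using deg len by simp
  ultimately have factors: "q = smult (lead_coeff q) (linear_factors zs)"
    using eq_smult_linear_factors sorted roots by blast
  have "0 < lead_coeff q"
  proof (cases "0 < poly q 0")
    case True
    have "poly q 0 = lead_coeff q * poly (linear_factors zs) 0" using factors by (metis poly_smult)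
    moreover have "0 < poly (linear_factors zs) 0" using neg by (intro linear_factors_pos) auto
    ultimately show ?thesis using True by (simp add: zero_less_mult_iff)
  qed (use pos in auto)
  then show ?thesis
    using factors between sorted neg len by (auto simp: has_simple_neg_roots_def)
qed

lemma sign_near_neg_infinity:
  fixes q :: "real poly"
  assumes "0 < lead_coeff q"
  shows "\<exists>M. \<forall>x\<le>M. 0 < (-1) ^ degree q * poly q x"
proof -
  let ?q = "smult ((-1) ^ degree q) (pcompose q [:0, -1:])"
  have "lead_coeff (pcompose q [:0, -1:]) = lead_coeff q * (-1) ^ degree q"
    by (subst lead_coeff_comp) auto
  then have lc: "lead_coeff ?q = lead_coeff q"
    by (simp add: mult.assoc[symmetric] power_mult_distrib[symmetric])
  obtain N where N: "\<forall>x\<ge>N. lead_coeff ?q \<le> poly ?q x"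
    using poly_pinfty_gt_lc[of ?q] lc assms by auto
  have "0 < (-1) ^ degree q * poly q x" if "x \<le> - N" for x
  proof -
    have "lead_coeff q \<le> poly ?q (- x)" using N that lc by simp
    then show ?thesis using assms by (simp add: poly_pcompose)
  qed
  then show ?thesis by blast
qed

lemma alternating_signs_Cons_neg_infinity:
  assumes "alternating_signs q s ps" "0 < lead_coeff q" "s * (-1) ^ length ps = (-1) ^ degree q"
  shows "\<exists>M<a. alternating_signs q s (M # ps)"
proof -
  obtain M where M: "\<forall>x\<le>M. 0 < (-1) ^ degree q * poly q x"
    using sign_near_neg_infinity[OF assms(2)] by blast
  have "0 < s * (-1) ^ length ps * poly q (min M (a - 1))"
    unfolding assms(3) using M by simp
  then show ?thesis using alternating_signs_Cons[OF assms(1)] by (intro exI[of _ "min M (a - 1)"]) auto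
qed

context
  fixes p :: "real poly" and rs :: "real list"
  assumes p: "has_simple_neg_roots p rs"
begin

context
  fixes q :: "real poly" and g :: "real \<Rightarrow> real"
  assumes q_at_roots: "\<forall>r\<in>set rs. poly q r = g r * poly (pderiv p) r"
begin

lemma alternating_signs_at_roots:
  assumes "\<forall>r\<in>set rs. 0 < s * g r"
  shows "alternating_signs q s rs"
  unfolding alternating_signs_def
proof (intro allI impI)
  fix i assume i: "i < length rs"
  then have "0 < (s * g (rs ! i)) * ((-1) ^ (length rs - 1 - i) * poly (pderiv p) (rs ! i))"
    using assms pderiv_sign_at_root[OF p i] by (simp add: nth_mem)
  then show "0 < s * (-1) ^ (length rs - 1 - i) * poly q (rs ! i)"
    using q_at_roots i by (simp add: nth_mem algebra_simps)
qed

lemma alternates_left_if_roots_right: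
  assumes "\<forall>r\<in>set rs. g r < 0" "0 < poly q 0" "degree q \<le> length rs"
  shows "(\<exists>zs. has_simple_neg_roots q zs) \<and> alternates_left p q"
proof -
  have "alternating_signs q (-1) rs" using assms(1) by (intro alternating_signs_at_roots) auto
  then have signs: "alternating_signs q 1 (rs @ [0])"
    using alternating_signs_snoc[of q "-1" rs 0] assms(2) by simp
  have "sorted_wrt (<) (rs @ [0])" "\<forall>x\<in>set (rs @ [0]). x \<le> 0"
    using has_simple_neg_rootsD[OF p] by (auto simp: sorted_wrt_append less_imp_le)
  from roots_between_sign_changes[OF this signs] assms(2,3)
  obtain zs where zs: "has_simple_neg_roots q zs" "length zs = length rs"
    "\<forall>i<length zs. (rs @ [0]) ! i < zs ! i \<and> zs ! i < (rs @ [0]) ! Suc i"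
    by auto
  have "\<forall>i<length rs. rs ! i \<le> zs ! i \<and> (i + 1 < length rs \<longrightarrow> zs ! i \<le> rs ! (i + 1))"
    using zs(2,3) by (auto simp: nth_append less_imp_le)
  moreover have "degree p = degree q"
    using zs(2) has_simple_neg_roots_degree[OF p] has_simple_neg_roots_degree[OF zs(1)] by simp
  ultimately show ?thesis
    using zs(1) has_simple_neg_roots_zero_list[OF p] has_simple_neg_roots_zero_list[OF zs(1)]
    unfolding alternates_left_def by (intro conjI exI[of _ zs] exI[of _ rs]) auto
qed

lemma alternates_left_if_roots_left:
  assumes "rs \<noteq> []" "\<forall>r\<in>set rs. 0 < g r" "0 < lead_coeff q" "degree q = length rs"
  shows "(\<exists>zs. has_simple_neg_roots q zs) \<and> alternates_left q p"
proof -
  have "alternating_signs q 1 rs" using assms(2) by (intro alternating_signs_at_roots) auto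
  with assms(3,4) obtain M where M: "M < hd rs" "alternating_signs q 1 (M # rs)"
    using alternating_signs_Cons_neg_infinity[of q 1 rs] by auto
  have "sorted_wrt (<) (M # rs)" "\<forall>x\<in>set (M # rs). x \<le> 0"
    using has_simple_neg_rootsD[OF p] M(1) assms(1) by (cases rs; fastforce)+
  from roots_between_sign_changes[OF this M(2)] assms(3,4)
  obtain zs where zs: "has_simple_neg_roots q zs" "length zs = length rs"
    "\<forall>i<length zs. (M # rs) ! i < zs ! i \<and> zs ! i < (M # rs) ! Suc i"
    by auto
  have "\<forall>i<length zs. zs ! i \<le> rs ! i \<and> (i + 1 < length zs \<longrightarrow> rs ! i \<le> zs ! (i + 1))"
    using zs(3) by (auto simp: less_imp_le)
  moreover have "degree q = degree p"
    using zs(2) has_simple_neg_roots_degree[OF p] has_simple_neg_roots_degree[OF zs(1)] by simp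
  ultimately show ?thesis
    using zs(1) has_simple_neg_roots_zero_list[OF p] has_simple_neg_roots_zero_list[OF zs(1)]
    unfolding alternates_left_def by (intro conjI exI[of _ rs] exI[of _ zs]) auto
qed

lemma interlaces_if_roots_inside:
  assumes "\<forall>r\<in>set rs. 0 < g r" "0 < poly q 0" "degree q < length rs"
  shows "(\<exists>zs. has_simple_neg_roots q zs) \<and> interlaces q p"
proof -
  have signs: "alternating_signs q 1 rs" using assms(1) by (intro alternating_signs_at_roots) auto
  have "\<forall>x\<in>set rs. x \<le> 0" using has_simple_neg_rootsD(3)[OF p] by (auto simp: less_imp_le)
  from roots_between_sign_changes[OF has_simple_neg_rootsD(2)[OF p] this signs] assms(2,3)
  obtain zs where zs: "has_simple_neg_roots q zs" "length zs = length rs - 1"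
    "\<forall>i<length zs. rs ! i < zs ! i \<and> zs ! i < rs ! Suc i"
    by auto
  have "degree p = degree q + 1"
    using zs(2) assms(3) has_simple_neg_roots_degree[OF p] has_simple_neg_roots_degree[OF zs(1)] by simp
  moreover have "\<forall>i<length zs. rs ! i \<le> zs ! i \<and> zs ! i \<le> rs ! (i + 1)"
    using zs(3) by (auto simp: less_imp_le)
  ultimately show ?thesis
    using zs(1) has_simple_neg_roots_zero_list[OF p] has_simple_neg_roots_zero_list[OF zs(1)]
    unfolding interlaces_def by (intro conjI exI[of _ zs] exI[of _ rs]) auto
qed

lemma simple_neg_roots_if_roots_both:
  assumes "rs \<noteq> []" "\<forall>r\<in>set rs. g r < 0" "0 < lead_coeff q" "0 < poly q 0"
    "degree q = Suc (length rs)"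
  shows "\<exists>zs. has_simple_neg_roots q zs"
proof -
  have "alternating_signs q (-1) rs" using assms(2) by (intro alternating_signs_at_roots) auto
  then have "alternating_signs q 1 (rs @ [0])"
    using alternating_signs_snoc[of q "-1" rs 0] assms(4) by simp
  with assms(3,5) obtain M where M: "M < hd rs" "alternating_signs q 1 (M # rs @ [0])"
    using alternating_signs_Cons_neg_infinity[of q 1 "rs @ [0]"] by auto
  have "sorted_wrt (<) (M # rs @ [0])" "\<forall>x\<in>set (M # rs @ [0]). x \<le> 0"
    using has_simple_neg_rootsD[OF p] M(1) assms(1) by (cases rs; fastforce simp: sorted_wrt_append)+
  from roots_between_sign_changes[OF this M(2)] assms(3,5) show ?thesis by auto
qed

end
end

lemma has_simple_neg_roots_const: "0 < c \<Longrightarrow> has_simple_neg_roots [:c:] []"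
  by (simp add: has_simple_neg_roots_def)

section \<open>Real-rootedness and interlacing\<close>

lemma S_poly_simple_neg_roots:
  "2 \<le> n \<Longrightarrow> \<exists>rs. has_simple_neg_roots (S_poly n) rs \<and> degree (S_poly n) = n div 2"
proof (induction n rule: dec_induct)
  case base
  have "S_poly 2 = [:1, 1:]" using S_poly_split[of 2] S_plus_2 S_minus_2 by (simp add: one_pCons)
  moreover have "has_simple_neg_roots [:1, 1:] [-1]" by (simp add: has_simple_neg_roots_def)
  ultimately show ?case by auto
next
  case (step n)
  then obtain rs where rs: "has_simple_neg_roots (S_poly n) rs" and deg: "degree (S_poly n) = n div 2"
    by blast
  let ?T = "S_poly n" and ?Q = "diff_op 1 1 n (-2) (S_poly n)"
  have len: "length rs = n div 2" "rs \<noteq> []"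
    using has_simple_neg_roots_degree[OF rs] deg step.hyps by auto
  have at_roots: "\<forall>r\<in>set rs. poly ?Q r = (r - 2 * r\<^sup>2) * poly (pderiv ?T) r"
    using has_simple_neg_roots_root[OF rs] by simp
  have neg: "\<forall>r\<in>set rs. r - 2 * r\<^sup>2 < 0"
    using has_simple_neg_rootsD(3)[OF rs] by (auto simp: power2_eq_square mult_neg_neg add_neg_neg)
  have Q0: "0 < poly ?Q 0" using has_simple_neg_roots_poly_0[OF rs] by simp
  show ?case
  proof (cases "even n")
    case True
    then have "real n - 2 * real (n div 2) = 0" by (auto elim!: evenE)
    then have "degree ?Q \<le> n div 2" by (intro degree_diff_op_le) (simp_all add: deg)
    then have "(\<exists>zs. has_simple_neg_roots ?Q zs) \<and> alternates_left ?T ?Q"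
      using alternates_left_if_roots_right[OF rs at_roots neg Q0] len by simp
    then show ?thesis using S_poly_Suc True deg by (auto simp: alternates_left_def)
  next
    case False
    then have "real n - 2 * real (n div 2) = 1" by (auto elim!: oddE)
    then have "coeff ?Q (Suc (n div 2)) = lead_coeff ?T"
      using coeff_diff_op_Suc_degree[of 1 1 n "-2" ?T] deg by simp
    then have dQ: "degree ?Q = Suc (length rs)" and lcQ: "0 < lead_coeff ?Q"
      using degree_eq_if_coeff_nonzero[of ?Q "Suc (n div 2)"] degree_diff_op_le_Suc[of 1 1 n "-2" ?T]
        deg len has_simple_neg_rootsD(1)[OF rs]
      by auto
    then have "\<exists>zs. has_simple_neg_roots ?Q zs"
      using simple_neg_roots_if_roots_both[OF rs at_roots len(2) neg lcQ Q0 dQ] by simp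
    then show ?thesis using S_poly_Suc False dQ len by auto
  qed
qed

lemma P_poly_Suc_alternates_left:
  assumes "2 \<le> m"
  shows "RZ {..<0} (P_poly (Suc m)) \<and> alternates_left (P_poly (Suc m)) (S_poly m)"
proof -
  obtain rs where rs: "has_simple_neg_roots (S_poly m) rs" and deg: "degree (S_poly m) = m div 2"
    using S_poly_simple_neg_roots[OF assms] by blast
  let ?T = "S_poly m" and ?Q = "diff_op (m + 1) (-1) 0 0 (S_poly m)"
  have len: "length rs = m div 2" "rs \<noteq> []"
    using has_simple_neg_roots_degree[OF rs] deg assms by auto
  have at_roots: "\<forall>r\<in>set rs. poly ?Q r = (- r) * poly (pderiv ?T) r"
    using has_simple_neg_roots_root[OF rs] by simp
  have pos: "\<forall>r\<in>set rs. 0 < - r" using has_simple_neg_rootsD(3)[OF rs] by auto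
  have "0 < real m + 1 - real (m div 2)" by linarith
  then have "0 < coeff ?Q (degree ?T)"
    using coeff_diff_op_degree[of "m + 1" "-1" ?T] has_simple_neg_rootsD(1)[OF rs] deg by simp
  then have dQ: "degree ?Q = length rs" and lcQ: "0 < lead_coeff ?Q"
    using degree_eq_if_coeff_nonzero[of ?Q "degree ?T"] degree_diff_op_le[of ?T "degree ?T" 0 0]
      deg len by auto
  show ?thesis
    using alternates_left_if_roots_left[OF rs at_roots len(2) pos lcQ dQ] P_poly_Suc[OF assms]
      has_simple_neg_roots_RZ by auto
qed

lemma P_minus_Suc_alternates_left:
  assumes "2 \<le> m"
  shows "RZ {..<0} (P_minus (Suc m)) \<and> alternates_left (S_poly m) (P_minus (Suc m))"
proof -
  obtain rs where rs: "has_simple_neg_roots (S_poly m) rs"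
    using S_poly_simple_neg_roots[OF assms] by blast
  let ?T = "S_poly m" and ?Q = "diff_op 1 1 0 0 (S_poly m)"
  have at_roots: "\<forall>r\<in>set rs. poly ?Q r = r * poly (pderiv ?T) r"
    using has_simple_neg_roots_root[OF rs] by simp
  have "degree ?Q \<le> length rs"
    using degree_diff_op_le[of ?T "length rs" 0 0] has_simple_neg_roots_degree[OF rs] by simp
  moreover have "0 < poly ?Q 0" using has_simple_neg_roots_poly_0[OF rs] by simp
  ultimately show ?thesis
    using alternates_left_if_roots_right[OF rs at_roots] has_simple_neg_rootsD(3)[OF rs]
      P_minus_Suc[OF assms] has_simple_neg_roots_RZ by auto
qed

lemma P_plus_Suc_prec:
  assumes "2 \<le> m"
  shows "RZ {..<0} (P_plus (Suc m)) \<and> prec (P_plus (Suc m)) (S_poly m)"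
proof -
  obtain rs where rs: "has_simple_neg_roots (S_poly m) rs" and deg: "degree (S_poly m) = m div 2"
    using S_poly_simple_neg_roots[OF assms] by blast
  let ?T = "S_poly m" and ?Q = "diff_op m (-2) 0 0 (S_poly m)"
  have len: "length rs = m div 2" "rs \<noteq> []"
    using has_simple_neg_roots_degree[OF rs] deg assms by auto
  have at_roots: "\<forall>r\<in>set rs. poly ?Q r = (-2 * r) * poly (pderiv ?T) r"
    using has_simple_neg_roots_root[OF rs] by simp
  have pos: "\<forall>r\<in>set rs. 0 < -2 * r" using has_simple_neg_rootsD(3)[OF rs] by auto
  have Q0: "0 < poly ?Q 0" using has_simple_neg_roots_poly_0[OF rs] assms by simp
  have degQ: "degree ?Q \<le> length rs"
    using degree_diff_op_le[of ?T "length rs" 0 0] has_simple_neg_roots_degree[OF rs] by simp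
  have coeffQ: "coeff ?Q (length rs) = (real m - 2 * real (m div 2)) * lead_coeff ?T"
    using coeff_diff_op_degree[of m "-2" ?T] deg len by simp
  have "(\<exists>zs. has_simple_neg_roots ?Q zs) \<and> prec ?Q ?T"
  proof (cases "even m")
    case True
    then have "coeff ?Q (length rs) = 0" using coeffQ by (auto elim!: evenE)
    have "degree ?Q \<noteq> length rs"
    proof
      assume "degree ?Q = length rs"
      then have "?Q = 0" using \<open>coeff ?Q (length rs) = 0\<close> by (metis leading_coeff_0_iff)
      then show False using \<open>degree ?Q = length rs\<close> len(2) by simp
    qed
    then have "degree ?Q < length rs" using degQ by simp
    then show ?thesis
      using interlaces_if_roots_inside[OF rs at_roots pos Q0] by (auto simp: prec_def)
  next
    case False
    then have coeff: "coeff ?Q (length rs) = lead_coeff ?T" using coeffQ by (auto elim!: oddE)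
    then have "degree ?Q = length rs \<and> lead_coeff ?Q = coeff ?Q (length rs)"
      using has_simple_neg_roots_nonzero[OF rs] by (intro degree_eq_if_coeff_nonzero[OF degQ]) simp
    then have dQ: "degree ?Q = length rs" and lcQ: "0 < lead_coeff ?Q"
      using coeff has_simple_neg_rootsD(1)[OF rs] by auto
    then show ?thesis
      using alternates_left_if_roots_left[OF rs at_roots len(2) pos lcQ dQ] by (auto simp: prec_def)
  qed
  then show ?thesis using P_plus_Suc[OF assms] has_simple_neg_roots_RZ by auto
qed

theorem theorem8:
  fixes n :: nat
  assumes "n \<ge> 2"
  shows "RZ {..<0} (P_poly n) \<and> RZ {..<0} (P_plus n) \<and> RZ {..<0} (P_minus n) \<and>
         alternates_left (P_poly (n + 1)) (S_poly n) \<and>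
         prec (P_plus (n + 1)) (S_poly n) \<and>
         alternates_left (S_poly n) (P_minus (n + 1))"
proof -
  have "RZ {..<0} (P_poly n) \<and> RZ {..<0} (P_plus n) \<and> RZ {..<0} (P_minus n)"
  proof (cases "n = 2")
    case True
    have "RZ {..<0} [:c:]" if "0 < c" for c
      using has_simple_neg_roots_RZ[OF has_simple_neg_roots_const[OF that]] .
    then show ?thesis
      using P_polys_2 True by (simp add: numeral_poly one_pCons)
  next
    case False
    then obtain m where "n = Suc m" "2 \<le> m" using assms by (cases n) auto
    then show ?thesis
      using P_poly_Suc_alternates_left P_plus_Suc_prec P_minus_Suc_alternates_left by blast
  qed
  then show ?thesis
    using P_poly_Suc_alternates_left[OF assms] P_plus_Suc_prec[OF assms]
      P_minus_Suc_alternates_left[OF assms] by simp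
qed

end
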